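(* Let $A\in\mathbb{R}^{m_1\times d_1}$ and $B\in\mathbb{R}^{m_2\times d_2}$ be completely mixable matrices that have been permuted so that each has all row sums equal. Define the matrix $C=A\oplus B$ with $m_1m_2$ rows and $d_1d_2$ columns by $C_{m_2(i-1)+k,\,d_2(j-1)+l}=A_{ij}+B_{kl}$ for $1\leq i\leq m_1$, $1\leq j\leq d_1$, $1\leq k\leq m_2$, $1\leq l\leq d_2$ (i.e. the block matrix obtained by replacing each entry $A_{ij}$ of $A$ by the block $(A_{ij}+B_{kl})_{1\leq k\leq m_2,\,1\leq l\leq d_2}$). Then $C$ is completely mixable.
   Context: For $A\in\mathbb{R}^{m\times d}$ and $\Pi=(\pi_1,\dots,\pi_d)\in\mathfrak{S}(m)^d$ (where $\mathfrak{S}(m)$ is the symmetric group on $\{1,\dots,m\}$), $A^\Pi$ denotes the matrix with $A^\Pi_{i,j}=A_{\pi_j^{-1}(i),j}$. Define $\gamma(A)=\min_{\Pi}\max_{i}\sum_{j=1}^d A^\Pi_{i,j}$ and $\beta(A)=\max_{\Pi}\min_{i}\sum_{j=1}^d A^\Pi_{i,j}$. The matrix $A$ is called completely mixable if $\gamma(A)=\beta(A)$, i.e. if the entries within each column can be permuted so that all row sums are equal. *)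

theory Defs
  imports Complex_Main "HOL-Combinatorics.Permutations"
begin

text \<open>An m x d real matrix is represented as a function A :: nat => nat => real,
  with rows indexed by 0..<m and columns by 0..<d (0-based indices).
  A tuple Pi = (pi_1,...,pi_d) of permutations of the rows is a function
  nat => (nat => nat) with Pi j permuting {0..<m} for j < d; for
  definiteness (so that the set of tuples is finite) Pi j = id for j >= d.\<close>

definition perm_tuples :: "nat \<Rightarrow> nat \<Rightarrow> (nat \<Rightarrow> nat \<Rightarrow> nat) set" where
  "perm_tuples m d = {P. (\<forall>j<d. P j permutes {..<m}) \<and> (\<forall>j\<ge>d. P j = id)}"

definition permute_cols :: "(nat \<Rightarrow> nat \<Rightarrow> real) \<Rightarrow> (nat \<Rightarrow> nat \<Rightarrow> nat) \<Rightarrow> nat \<Rightarrow> nat \<Rightarrow> real" where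
  "permute_cols A P i j = A (inv (P j) i) j"

definition row_sum :: "nat \<Rightarrow> (nat \<Rightarrow> nat \<Rightarrow> real) \<Rightarrow> nat \<Rightarrow> real" where
  "row_sum d A i = (\<Sum>j<d. A i j)"

definition gamma :: "nat \<Rightarrow> nat \<Rightarrow> (nat \<Rightarrow> nat \<Rightarrow> real) \<Rightarrow> real" where
  "gamma m d A = Min ((\<lambda>P. Max ((\<lambda>i. row_sum d (permute_cols A P) i) ` {..<m})) ` perm_tuples m d)"

definition beta :: "nat \<Rightarrow> nat \<Rightarrow> (nat \<Rightarrow> nat \<Rightarrow> real) \<Rightarrow> real" where
  "beta m d A = Max ((\<lambda>P. Min ((\<lambda>i. row_sum d (permute_cols A P) i) ` {..<m})) ` perm_tuples m d)"

definition completely_mixable :: "nat \<Rightarrow> nat \<Rightarrow> (nat \<Rightarrow> nat \<Rightarrow> real) \<Rightarrow> bool" where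
  "completely_mixable m d A \<longleftrightarrow> gamma m d A = beta m d A"

definition block_oplus :: "nat \<Rightarrow> nat \<Rightarrow> (nat \<Rightarrow> nat \<Rightarrow> real) \<Rightarrow> (nat \<Rightarrow> nat \<Rightarrow> real) \<Rightarrow> nat \<Rightarrow> nat \<Rightarrow> real" where
  "block_oplus m2 d2 A B r c = A (r div m2) (c div d2) + B (r mod m2) (c mod d2)"

end

theory Submission
  imports Defs
begin

text \<open>Permuting entries within columns does not change the total of all entries, so the
  average row sum is the same for every permuted matrix; hence every permuted matrix has
  maximal row sum at least this average and minimal row sum at most it. A matrix whose
  row sums are already all equal therefore attains both bounds, giving gamma = beta.
  For the block matrix, the row sum of row m2 i + k is d2 times the i-th row sum of A
  plus d1 times the k-th row sum of B, which is constant when those of A and B are.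
  So only the equal-row-sum hypotheses are used; complete mixability of A and B is
  implied by them.\<close>

lemma finite_perm_tuples: "finite (perm_tuples m d)"
proof -
  let ?extend = "\<lambda>f j. if j < d then f j else id"
  have "perm_tuples m d \<subseteq> ?extend ` PiE {..<d} (\<lambda>_. {p. p permutes {..<m}})"
  proof
    fix P assume P: "P \<in> perm_tuples m d"
    then have "P = ?extend (restrict P {..<d})"
      by (auto simp: perm_tuples_def)
    moreover have "restrict P {..<d} \<in> PiE {..<d} (\<lambda>_. {p. p permutes {..<m}})"
      using P by (simp add: perm_tuples_def)
    ultimately show "P \<in> ?extend ` PiE {..<d} (\<lambda>_. {p. p permutes {..<m}})"
      by (rule image_eqI)
  qed
  moreover have "finite (PiE {..<d} (\<lambda>_. {p. p permutes {..<m}}))"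
    by (intro finite_PiE) (simp_all add: finite_permutations)
  ultimately show ?thesis
    by (meson finite_imageI finite_subset)
qed

lemma permute_cols_id: "permute_cols A (\<lambda>j. id) = A"
  by (simp add: permute_cols_def fun_eq_iff)

lemma id_in_perm_tuples: "(\<lambda>j. id) \<in> perm_tuples m d"
  by (simp add: perm_tuples_def permutes_id)

lemma sum_row_sum_permute_cols:
  assumes "P \<in> perm_tuples m d"
  shows "(\<Sum>i<m. row_sum d (permute_cols A P) i) = (\<Sum>i<m. row_sum d A i)"
proof -
  have "(\<Sum>i<m. A (inv (P j) i) j) = (\<Sum>i<m. A i j)" if "j < d" for j
  proof -
    have "inv (P j) permutes {..<m}"
      using assms that by (simp add: perm_tuples_def permutes_inv)
    then show ?thesis
      using sum.reindex_bij_betw[OF permutes_imp_bij, of "inv (P j)" "{..<m}" "\<lambda>i. A i j"]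
      by simp
  qed
  then have "(\<Sum>j<d. \<Sum>i<m. A (inv (P j) i) j) = (\<Sum>j<d. \<Sum>i<m. A i j)"
    by (rule sum.cong[OF refl]) simp
  then show ?thesis
    unfolding row_sum_def permute_cols_def
    by (simp only: sum.swap[of _ "{..<m}"])
qed

lemma average_le_Max:
  fixes f :: "'a \<Rightarrow> 'b::linordered_idom"
  assumes "finite I" "I \<noteq> {}" "sum f I = of_nat (card I) * S"
  shows "S \<le> Max (f ` I)"
proof -
  have "of_nat (card I) * S \<le> of_nat (card I) * Max (f ` I)"
    unfolding assms(3)[symmetric] by (rule sum_bounded_above) (simp add: assms(1))
  moreover have "card I > 0"
    using assms by (simp add: card_gt_0_iff)
  ultimately show ?thesis
    by simp
qed

lemma Min_le_average:
  fixes f :: "'a \<Rightarrow> 'b::linordered_idom"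
  assumes "finite I" "I \<noteq> {}" "sum f I = of_nat (card I) * S"
  shows "Min (f ` I) \<le> S"
proof -
  have "of_nat (card I) * Min (f ` I) \<le> of_nat (card I) * S"
    unfolding assms(3)[symmetric] by (rule sum_bounded_below) (simp add: assms(1))
  moreover have "card I > 0"
    using assms by (simp add: card_gt_0_iff)
  ultimately show ?thesis
    by simp
qed

lemma completely_mixable_if_constant_row_sums:
  assumes "0 < m" and Q: "Q \<in> perm_tuples m d"
    and const: "\<And>i. i < m \<Longrightarrow> row_sum d (permute_cols A Q) i = S"
  shows "completely_mixable m d A"
proof -
  let ?rows = "\<lambda>P. (\<lambda>i. row_sum d (permute_cols A P) i) ` {..<m}"
  have nonempty: "{..<m} \<noteq> {}"
    using \<open>0 < m\<close> by auto
  have total: "(\<Sum>i<m. row_sum d (permute_cols A P) i) = of_nat (card {..<m}) * S"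
    if "P \<in> perm_tuples m d" for P
  proof -
    have "(\<Sum>i<m. row_sum d (permute_cols A P) i) = (\<Sum>i<m. row_sum d (permute_cols A Q) i)"
      unfolding sum_row_sum_permute_cols[OF that] sum_row_sum_permute_cols[OF Q] ..
    also have "\<dots> = (\<Sum>i<m. S)"
      by (rule sum.cong) (simp_all add: const)
    finally show ?thesis
      by simp
  qed
  have "?rows Q = (\<lambda>i. S) ` {..<m}"
    by (rule image_cong) (simp_all add: const)
  then have rows_Q: "?rows Q = {S}"
    using nonempty by (simp add: image_constant_conv)
  have "gamma m d A = S"
    unfolding gamma_def
  proof (rule Min_eqI)
    show "finite ((\<lambda>P. Max (?rows P)) ` perm_tuples m d)"
      by (simp add: finite_perm_tuples)
    show "S \<le> y" if "y \<in> (\<lambda>P. Max (?rows P)) ` perm_tuples m d" for y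
      using that average_le_Max[OF finite_lessThan nonempty total] by blast
    show "S \<in> (\<lambda>P. Max (?rows P)) ` perm_tuples m d"
      by (rule image_eqI[where x = Q]) (simp_all add: rows_Q Q)
  qed
  moreover have "beta m d A = S"
    unfolding beta_def
  proof (rule Max_eqI)
    show "finite ((\<lambda>P. Min (?rows P)) ` perm_tuples m d)"
      by (simp add: finite_perm_tuples)
    show "y \<le> S" if "y \<in> (\<lambda>P. Min (?rows P)) ` perm_tuples m d" for y
      using that Min_le_average[OF finite_lessThan nonempty total] by blast
    show "S \<in> (\<lambda>P. Min (?rows P)) ` perm_tuples m d"
      by (rule image_eqI[where x = Q]) (simp_all add: rows_Q Q)
  qed
  ultimately show ?thesis
    by (simp add: completely_mixable_def)
qed

lemma sum_lessThan_mult_div_mod: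
  fixes k :: nat
  shows "(\<Sum>c<n * k. g (c div k) (c mod k)) = (\<Sum>j<n. \<Sum>l<k. g j l)"
proof -
  have "(\<Sum>c\<in>{j * k..<j * k + k}. g (c div k) (c mod k)) = (\<Sum>l<k. g j l)" for j
  proof -
    have "(\<Sum>c\<in>{j * k..<j * k + k}. g (c div k) (c mod k))
        = (\<Sum>l<k. g ((l + j * k) div k) ((l + j * k) mod k))"
      using sum.shift_bounds_nat_ivl[of "\<lambda>c. g (c div k) (c mod k)" 0 "j * k" k]
      by (simp add: add.commute atLeast0LessThan)
    also have "\<dots> = (\<Sum>l<k. g j l)"
      by (rule sum.cong) auto
    finally show ?thesis .
  qed
  then show ?thesis
    by (simp only: sum.nat_group[symmetric])
qed

lemma row_sum_block_oplus:
  "row_sum (d1 * d2) (block_oplus m2 d2 A B) r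
     = of_nat d2 * row_sum d1 A (r div m2) + of_nat d1 * row_sum d2 B (r mod m2)"
proof -
  have "row_sum (d1 * d2) (block_oplus m2 d2 A B) r
      = (\<Sum>j<d1. \<Sum>l<d2. A (r div m2) j + B (r mod m2) l)"
    unfolding row_sum_def block_oplus_def
    by (rule sum_lessThan_mult_div_mod)
  then show ?thesis
    by (simp add: row_sum_def sum.distrib sum_distrib_left)
qed

theorem proposition1:
  fixes A B :: "nat \<Rightarrow> nat \<Rightarrow> real" and m1 d1 m2 d2 :: nat
  assumes "0 < m1" "0 < d1" "0 < m2" "0 < d2"
    and "completely_mixable m1 d1 A" and "completely_mixable m2 d2 B"
    and "\<forall>i<m1. row_sum d1 A i = row_sum d1 A 0"
    and "\<forall>k<m2. row_sum d2 B k = row_sum d2 B 0"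
  shows "completely_mixable (m1 * m2) (d1 * d2) (block_oplus m2 d2 A B)"
proof (rule completely_mixable_if_constant_row_sums[OF _ id_in_perm_tuples])
  show "0 < m1 * m2"
    using assms(1,3) by simp
  fix r assume "r < m1 * m2"
  then have "row_sum d1 A (r div m2) = row_sum d1 A 0"
    using assms(7) less_mult_imp_div_less by blast
  moreover have "row_sum d2 B (r mod m2) = row_sum d2 B 0"
    using assms(3,8) mod_less_divisor by blast
  ultimately show "row_sum (d1 * d2) (permute_cols (block_oplus m2 d2 A B) (\<lambda>j. id)) r
      = of_nat d2 * row_sum d1 A 0 + of_nat d1 * row_sum d2 B 0"
    by (simp only: permute_cols_id row_sum_block_oplus)
qed

end
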